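(* Let $a,c,\mathcal{D},\mathcal{H}>0$ and $\hat\tau\ge0$ with $1-c^3\hat\tau>0$. There exists a unique $s=s^\ast=a/\mathcal{D}$ for which the layer problem (L) admits a heteroclinic orbit from $p_3(a,s^\ast)=(a,0,s^\ast,0)$ to $p_2(a)=(a,a,0,0)$. This heteroclinic orbit lies in the set $\{(w,v,s,j): w=a,\ a+j-v-\mathcal{D}s=0\}$.
   Context: The layer problem (L) in variables $(w,v,s,j)\in\mathbb{R}^4$, with $\dot{}=d/d\zeta$, parameters $c>0$, $\hat\tau\ge0$ with $1-c^3\hat\tau>0$, $\mathcal{D},\mathcal{H}>0$: $$\dot w=0,\quad \dot v=\frac{c^3}{1-c^3\hat\tau}\Big(\hat\tau(w+j-v-\mathcal{D}s)v^2-\hat\tau\mathcal{H}sv-j\Big),\quad \dot s=-\frac{\mathcal{H}}{\mathcal{D}}sv,\quad \dot j=\frac{1}{1-c^3\hat\tau}\Big((w+j-v-\mathcal{D}s)v^2-\mathcal{H}sv-c^3j\Big).$$ Points: $p_2(w)=(w,w,0,0)$, $p_3(w,s)=(w,0,s,0)$; all $p_3(w,s)$ are equilibria of (L). *)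

theory Defs
  imports "HOL-Analysis.Analysis"
begin

type_synonym state = "real \<times> real \<times> real \<times> real"

definition layer_rhs :: "real \<Rightarrow> real \<Rightarrow> real \<Rightarrow> real \<Rightarrow> state \<Rightarrow> state" where
  "layer_rhs c tau D H x = (case x of (w, v, s, j) \<Rightarrow>
     (0,
      c^3 / (1 - c^3 * tau) * (tau * (w + j - v - D * s) * v^2 - tau * H * s * v - j),
      - (H / D) * s * v,
      1 / (1 - c^3 * tau) * ((w + j - v - D * s) * v^2 - H * s * v - c^3 * j)))"

definition p2 :: "real \<Rightarrow> state" where
  "p2 w = (w, w, 0, 0)"

definition p3 :: "real \<Rightarrow> real \<Rightarrow> state" where
  "p3 w s = (w, 0, s, 0)"

definition heteroclinic :: "real \<Rightarrow> real \<Rightarrow> real \<Rightarrow> real \<Rightarrow> (real \<Rightarrow> state) \<Rightarrow> state \<Rightarrow> state \<Rightarrow> bool" where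
  "heteroclinic c tau D H phi p q \<longleftrightarrow>
     p \<noteq> q \<and>
     (\<forall>\<zeta>. (phi has_vector_derivative layer_rhs c tau D H (phi \<zeta>)) (at \<zeta>)) \<and>
     (phi \<longlongrightarrow> p) at_bot \<and> (phi \<longlongrightarrow> q) at_top"

end

theory Submission
  imports Defs "HOL-Real_Asymp.Real_Asymp"
begin

text \<open>Along every solution of (L) the component \<open>w\<close> is constant and the defect
  \<open>u = w + j - v - D s\<close> satisfies \<open>u' = u v\<^sup>2\<close>, so \<open>u\<^sup>2\<close> is nondecreasing. On an orbit ending
  at \<open>p\<^sub>2(a)\<close> this forces \<open>u = 0\<close> throughout, and the limit at \<open>p\<^sub>3(a, s)\<close> gives \<open>a - D s = 0\<close>.

  Conversely, on the invariant plane \<open>w = a, u = 0\<close> the substitution \<open>s = (a/D) r\<close>,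
  \<open>v = a (1 - r) q\<close> with the time change \<open>d\<theta>/d\<zeta> = (a H/D) q\<close> decouples \<open>r = 1/(1 + e\<^sup>\<theta>)\<close>
  and leaves a scalar non-autonomous equation for \<open>q\<close> whose right-hand side is strictly
  decreasing in \<open>q\<close> and points into an interval \<open>[m, 1]\<close>. Its bounded entire solution is the
  fixed point of a contracting damped-integral operator, and it tends to \<open>1\<close> as \<open>\<theta> \<rightarrow> \<infinity>\<close>.\<close>

section \<open>Damped integrals\<close>

text \<open>The integral of \<open>exp (- n (\<theta> - t)) * g t\<close> over \<open>t \<le> \<theta>\<close>, written with \<open>r = exp t\<close>
  as a proper integral; for \<open>n \<ge> 2\<close> the new integrand is continuous at \<open>r = 0\<close>.\<close>
definition damped_integral :: "nat \<Rightarrow> (real \<Rightarrow> real) \<Rightarrow> real \<Rightarrow> real" where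
  "damped_integral n g \<theta> = exp (- (real n * \<theta>)) * integral {0..exp \<theta>} (\<lambda>r. r^(n-1) * g (ln r))"

lemma continuous_on_damped_integrand:
  assumes n: "n \<ge> 2" and g: "continuous_on UNIV g" and B: "\<And>x. \<bar>g x\<bar> \<le> B"
  shows "continuous_on {0..} (\<lambda>r::real. r^(n-1) * g (ln r))"
  unfolding continuous_on_eq_continuous_within
proof
  fix x :: real assume x: "x \<in> {0..}"
  show "continuous (at x within {0..}) (\<lambda>r. r^(n-1) * g (ln r))"
  proof (cases "x = 0")
    case False
    with x have "isCont ln x"
      by (simp add: isCont_ln)
    moreover have "isCont g (ln x)"
      using g by (simp add: continuous_on_eq_continuous_at)
    ultimately have "isCont (\<lambda>r. g (ln r)) x"
      by (rule isCont_o2)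
    then have "isCont (\<lambda>r. r^(n-1) * g (ln r)) x"
      by (intro continuous_intros) auto
    then show ?thesis
      by (rule continuous_at_imp_continuous_within)
  next
    case True
    have "((\<lambda>r::real. r^(n-1) * g (ln r)) \<longlongrightarrow> 0) (at 0 within {0..})"
    proof (rule Lim_null_comparison)
      show "\<forall>\<^sub>F r in at 0 within {0..}. norm (r^(n-1) * g (ln r)) \<le> B * \<bar>r\<bar>^(n-1)"
      proof (intro always_eventually allI)
        fix r :: real
        have "\<bar>g (ln r)\<bar> * \<bar>r\<bar>^(n-1) \<le> B * \<bar>r\<bar>^(n-1)"
          by (rule mult_right_mono[OF B]) simp
        then show "norm (r^(n-1) * g (ln r)) \<le> B * \<bar>r\<bar>^(n-1)"
          by (simp add: abs_mult power_abs mult.commute)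
      qed
      have "((\<lambda>r::real. B * \<bar>r\<bar>^(n-1)) \<longlongrightarrow> B * \<bar>0\<bar>^(n-1)) (at 0 within {0..})"
        by (intro tendsto_intros)
      then show "((\<lambda>r::real. B * \<bar>r\<bar>^(n-1)) \<longlongrightarrow> 0) (at 0 within {0..})"
        using n by (simp add: power_0_left)
    qed
    then show ?thesis
      using n True by (simp add: continuous_within power_0_left)
  qed
qed

lemma integrable_damped_integrand:
  assumes "n \<ge> 2" "continuous_on UNIV g" "\<And>x. \<bar>g x\<bar> \<le> B"
  shows "(\<lambda>r::real. r^(n-1) * g (ln r)) integrable_on {0..R}"
  by (rule integrable_continuous_interval,
      rule continuous_on_subset[OF continuous_on_damped_integrand[OF assms]]) auto

lemma power_has_integral_atLeastAtMost_0:
  assumes "R \<ge> 0" "n \<ge> 1"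
  shows "((\<lambda>r::real. r^(n-1)) has_integral R^n / real n) {0..R}"
proof -
  have "((\<lambda>r::real. r^(n-1)) has_integral (R^n / real n - 0^n / real n)) {0..R}"
    using assms by (intro fundamental_theorem_of_calculus)
      (auto intro!: derivative_eq_intros simp flip: has_real_derivative_iff_has_vector_derivative)
  then show ?thesis
    using assms by (simp add: power_0_left)
qed

lemma exp_minus_mult_exp_power: "exp (- (real n * \<theta>)) * exp \<theta> ^ n = 1"
  by (simp add: exp_of_nat_mult[symmetric] exp_minus field_simps)

lemma damped_integral_bounds:
  assumes n: "n \<ge> 2" and g: "continuous_on UNIV g" and lh: "\<And>x. lo \<le> g x \<and> g x \<le> hi"
  shows "lo / real n \<le> damped_integral n g \<theta> \<and> damped_integral n g \<theta> \<le> hi / real n"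
proof -
  define R where "R = exp \<theta>"
  define I where "I = integral {0..R} (\<lambda>r. r^(n-1) * g (ln r))"
  have "\<bar>g x\<bar> \<le> max \<bar>lo\<bar> \<bar>hi\<bar>" for x
    using lh[of x] by auto
  then have I: "((\<lambda>r. r^(n-1) * g (ln r)) has_integral I) {0..R}"
    unfolding I_def by (intro integrable_integral integrable_damped_integrand[OF n g])
  have pow: "((\<lambda>r. y * r^(n-1)) has_integral y * (R^n / real n)) {0..R}" for y
    using n unfolding R_def by (intro has_integral_mult_right power_has_integral_atLeastAtMost_0) auto
  have "lo * (R^n / real n) \<le> I" "I \<le> hi * (R^n / real n)"
    using has_integral_le[OF pow I] has_integral_le[OF I pow] lh
    by (force intro!: mult_right_mono simp: mult.commute)+
  then have "exp (- (real n * \<theta>)) * (lo * (R^n / real n)) \<le> exp (- (real n * \<theta>)) * I"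
    "exp (- (real n * \<theta>)) * I \<le> exp (- (real n * \<theta>)) * (hi * (R^n / real n))"
    by (meson exp_ge_zero mult_left_mono)+
  moreover have scale: "exp (- (real n * \<theta>)) * (y * (R^n / real n)) = y / real n" for y
    using exp_minus_mult_exp_power[of n \<theta>] unfolding R_def by (simp add: field_simps)
  ultimately show ?thesis
    unfolding damped_integral_def R_def[symmetric] I_def[symmetric] scale by simp
qed

lemma damped_integral_diff:
  assumes "n \<ge> 2"
    and "continuous_on UNIV g1" "\<And>x. \<bar>g1 x\<bar> \<le> B1"
    and "continuous_on UNIV g2" "\<And>x. \<bar>g2 x\<bar> \<le> B2"
  shows "damped_integral n g1 \<theta> - damped_integral n g2 \<theta> = damped_integral n (\<lambda>x. g1 x - g2 x) \<theta>"
  using integral_diff[OF integrable_damped_integrand[OF assms(1-3)]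
      integrable_damped_integrand[OF assms(1,4,5)], of "exp \<theta>"]
  by (simp add: damped_integral_def right_diff_distrib)

lemma damped_integral_has_derivative:
  assumes n: "n \<ge> 2" and g: "continuous_on UNIV g" and B: "\<And>x. \<bar>g x\<bar> \<le> B"
  shows "(damped_integral n g has_real_derivative g \<theta> - real n * damped_integral n g \<theta>) (at \<theta>)"
proof -
  define k where "k = (\<lambda>r::real. r^(n-1) * g (ln r))"
  define G where "G = (\<lambda>R. integral {0..R} k)"
  have G: "(G has_real_derivative k R) (at R)" if "R > 0" for R
  proof -
    have "(G has_real_derivative k R) (at R within {0..R+1})"
      unfolding G_def k_def using that
      by (intro integral_has_real_derivative continuous_on_subset[OF continuous_on_damped_integrand[OF n g B]]) auto
    moreover have "at R within {0..R+1} = at R"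
      using that by (intro at_within_interior) auto
    ultimately show ?thesis by simp
  qed
  have G_exp: "((\<lambda>\<theta>. G (exp \<theta>)) has_real_derivative k (exp \<theta>) * exp \<theta>) (at \<theta>)"
    by (rule DERIV_chain2[OF G]) (auto intro: derivative_eq_intros)
  have "((\<lambda>\<theta>. exp (- (real n * \<theta>)) * G (exp \<theta>)) has_real_derivative
      exp (- (real n * \<theta>)) * (- real n) * G (exp \<theta>) + exp (- (real n * \<theta>)) * (k (exp \<theta>) * exp \<theta>)) (at \<theta>)"
    by (rule derivative_eq_intros G_exp refl)+ simp
  moreover have "exp (- (real n * \<theta>)) * (k (exp \<theta>) * exp \<theta>) = g \<theta>"
  proof -
    have "k (exp \<theta>) * exp \<theta> = exp \<theta> ^ n * g \<theta>"
      unfolding k_def using n by (simp add: power_Suc[symmetric] mult.commute mult.left_commute)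
    then show ?thesis
      using exp_minus_mult_exp_power[of n \<theta>] by (simp add: mult.assoc[symmetric])
  qed
  moreover have "damped_integral n g = (\<lambda>\<theta>. exp (- (real n * \<theta>)) * G (exp \<theta>))"
    unfolding damped_integral_def G_def k_def ..
  ultimately show ?thesis
    by (auto elim!: DERIV_cong simp: algebra_simps)
qed

lemma damped_integral_dist_le:
  assumes n: "n \<ge> 2"
    and g1: "continuous_on UNIV g1" "\<And>x. \<bar>g1 x\<bar> \<le> B1"
    and g2: "continuous_on UNIV g2" "\<And>x. \<bar>g2 x\<bar> \<le> B2"
    and e: "\<And>x. \<bar>g1 x - g2 x\<bar> \<le> e"
  shows "\<bar>damped_integral n g1 \<theta> - damped_integral n g2 \<theta>\<bar> \<le> e / real n"
proof -
  have "- e \<le> g1 x - g2 x \<and> g1 x - g2 x \<le> e" for x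
    using e[of x] by linarith
  then have "- e / real n \<le> damped_integral n (\<lambda>x. g1 x - g2 x) \<theta> \<and>
      damped_integral n (\<lambda>x. g1 x - g2 x) \<theta> \<le> e / real n"
    by (intro damped_integral_bounds[OF n] continuous_intros g1(1) g2(1))
  then show ?thesis
    unfolding damped_integral_diff[OF n g1 g2] by auto
qed

section \<open>Bounded entire solutions of scalar equations\<close>

lemma damped_equation_bounded_solution:
  fixes N :: "real \<Rightarrow> real \<Rightarrow> real"
  assumes n: "n \<ge> 2"
    and lip: "\<And>\<theta> y1 y2. \<bar>N \<theta> y1 - N \<theta> y2\<bar> \<le> k * \<bar>y1 - y2\<bar>" and k: "0 \<le> k" "k < real n"
    and range: "\<And>\<theta> y. lo \<le> N \<theta> y \<and> N \<theta> y \<le> hi"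
    and cont: "\<And>f. continuous_on UNIV f \<Longrightarrow> continuous_on UNIV (\<lambda>\<theta>. N \<theta> (f \<theta>))"
  shows "\<exists>q. (\<forall>\<theta>. lo / real n \<le> q \<theta> \<and> q \<theta> \<le> hi / real n) \<and>
    (\<forall>\<theta>. (q has_real_derivative N \<theta> (q \<theta>) - real n * q \<theta>) (at \<theta>))"
proof -
  have bound: "\<bar>N \<theta> y\<bar> \<le> \<bar>lo\<bar> + \<bar>hi\<bar>" for \<theta> y
    using range[of \<theta> y] by linarith
  define T where "T f = damped_integral n (\<lambda>\<theta>. N \<theta> (f \<theta>))" for f :: "real \<Rightarrow>\<^sub>C real"
  have T_range: "lo / real n \<le> T f \<theta> \<and> T f \<theta> \<le> hi / real n" for f \<theta>
    unfolding T_def using range by (intro damped_integral_bounds[OF n cont]) auto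
  have T': "(T f has_real_derivative N \<theta> (f \<theta>) - real n * T f \<theta>) (at \<theta>)" for f \<theta>
    unfolding T_def by (rule damped_integral_has_derivative[OF n cont bound]) simp
  have T_bcontfun: "T f \<in> bcontfun" for f
  proof (rule bcontfun_normI)
    show "continuous_on UNIV (T f)"
      using T' by (meson DERIV_continuous continuous_at_imp_continuous_on)
    have "hi / real n \<le> \<bar>hi\<bar> / real n" "- (lo / real n) \<le> \<bar>lo\<bar> / real n"
      "0 \<le> \<bar>lo\<bar> / real n" "0 \<le> \<bar>hi\<bar> / real n"
      using divide_right_mono[of "- lo" "\<bar>lo\<bar>" "real n"] by (simp_all add: divide_right_mono)
    then show "norm (T f \<theta>) \<le> \<bar>lo\<bar> / real n + \<bar>hi\<bar> / real n" for \<theta>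
      using T_range[of f \<theta>] unfolding real_norm_def abs_le_iff by (intro conjI; linarith)
  qed
  have "\<exists>!f. Bcontfun (T f) = f"
  proof (rule banach_fix_type)
    show "0 \<le> k / real n" "k / real n < 1"
      using k n by auto
    have "\<bar>T f \<theta> - T g \<theta>\<bar> \<le> k * dist f g / real n" for f g \<theta>
    proof (unfold T_def, intro damped_integral_dist_le[OF n cont bound cont bound])
      fix x
      have "\<bar>f x - g x\<bar> \<le> dist f g"
        using dist_bounded[of f x g] by (simp add: dist_real_def)
      then show "\<bar>N x (f x) - N x (g x)\<bar> \<le> k * dist f g"
        using lip[of x "f x" "g x"] mult_left_mono[OF _ k(1)] by (meson order_trans)
    qed simp_all
    then show "\<forall>f g. dist (Bcontfun (T f)) (Bcontfun (T g)) \<le> k / real n * dist f g"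
      using T_bcontfun by (auto intro!: dist_bound simp: Bcontfun_inverse dist_real_def)
  qed
  then obtain f where "Bcontfun (T f) = f"
    by blast
  then have "apply_bcontfun f = T f"
    using T_bcontfun by (metis Bcontfun_inverse)
  then show ?thesis
    using T_range T' by metis
qed

lemma continuous_on_compose_Pair:
  assumes "continuous_on (UNIV \<times> S) (\<lambda>(\<theta>, y). F \<theta> y)" "continuous_on UNIV f" "\<And>\<theta>. f \<theta> \<in> S"
  shows "continuous_on UNIV (\<lambda>\<theta>. F \<theta> (f \<theta>))"
proof -
  have "continuous_on UNIV (\<lambda>\<theta>. (\<theta>, f \<theta>))"
    using assms(2) by (intro continuous_intros)
  moreover have "range (\<lambda>\<theta>. (\<theta>, f \<theta>)) \<subseteq> UNIV \<times> S"
    using assms(3) by auto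
  ultimately show ?thesis
    using continuous_on_compose2[OF assms(1)] by fastforce
qed

text \<open>With \<open>y\<close> clamped to \<open>[\<alpha>, \<beta>]\<close> and an integer \<open>L \<ge> M\<close>, the shift \<open>N \<theta> y = F \<theta> y + L y\<close>
  is nondecreasing, \<open>(L - mu)\<close>-Lipschitz and takes values in \<open>[L \<alpha>, L \<beta>]\<close>; hence
  \<open>q' = N \<theta> q - L q\<close> has a solution in \<open>[\<alpha>, \<beta>]\<close>, where this equation is \<open>q' = F \<theta> q\<close>.\<close>
lemma bounded_entire_solution:
  fixes F :: "real \<Rightarrow> real \<Rightarrow> real"
  assumes "\<alpha> \<le> \<beta>" and mu: "0 < mu" "mu \<le> M"
    and cont: "continuous_on (UNIV \<times> {\<alpha>..\<beta>}) (\<lambda>(\<theta>, y). F \<theta> y)"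
    and lo: "\<And>\<theta>. F \<theta> \<alpha> \<ge> 0" and hi: "\<And>\<theta>. F \<theta> \<beta> \<le> 0"
    and slope: "\<And>\<theta> y1 y2. \<alpha> \<le> y2 \<Longrightarrow> y2 \<le> y1 \<Longrightarrow> y1 \<le> \<beta> \<Longrightarrow>
      mu * (y1 - y2) \<le> F \<theta> y2 - F \<theta> y1 \<and> F \<theta> y2 - F \<theta> y1 \<le> M * (y1 - y2)"
  shows "\<exists>q. (\<forall>\<theta>. \<alpha> \<le> q \<theta> \<and> q \<theta> \<le> \<beta>) \<and> (\<forall>\<theta>. (q has_real_derivative F \<theta> (q \<theta>)) (at \<theta>))"
proof -
  define n where "n = nat \<lceil>M\<rceil> + 2"
  define L where "L = real n"
  have n: "n \<ge> 2" and LM: "M \<le> L"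
    unfolding n_def L_def by linarith+
  define cl where "cl y = max \<alpha> (min \<beta> y)" for y
  have cl_range: "\<alpha> \<le> cl y \<and> cl y \<le> \<beta>" and cl_id: "\<alpha> \<le> z \<Longrightarrow> z \<le> \<beta> \<Longrightarrow> cl z = z"
    and cl_lip: "\<bar>cl y1 - cl y2\<bar> \<le> \<bar>y1 - y2\<bar>" for y z y1 y2
    unfolding cl_def using \<open>\<alpha> \<le> \<beta>\<close> by auto
  define N where "N \<theta> y = F \<theta> (cl y) + L * cl y" for \<theta> y
  have N_mono: "0 \<le> N \<theta> y1 - N \<theta> y2 \<and> N \<theta> y1 - N \<theta> y2 \<le> (L - mu) * (cl y1 - cl y2)"
    if "cl y2 \<le> cl y1" for \<theta> y1 y2
    using slope[of "cl y2" "cl y1" \<theta>] mult_right_mono[OF LM, of "cl y1 - cl y2"] that cl_range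
    unfolding N_def by (auto simp: algebra_simps)
  have N_lip: "\<bar>N \<theta> y1 - N \<theta> y2\<bar> \<le> (L - mu) * \<bar>y1 - y2\<bar>" for \<theta> y1 y2
  proof -
    have "\<bar>N \<theta> y1 - N \<theta> y2\<bar> \<le> (L - mu) * \<bar>cl y1 - cl y2\<bar>"
      using N_mono[of y1 y2 \<theta>] N_mono[of y2 y1 \<theta>] by (cases "cl y2 \<le> cl y1") auto
    also have "\<dots> \<le> (L - mu) * \<bar>y1 - y2\<bar>"
      using cl_lip LM mu by (intro mult_left_mono) auto
    finally show ?thesis .
  qed
  have N_range: "L * \<alpha> \<le> N \<theta> y \<and> N \<theta> y \<le> L * \<beta>" for \<theta> y
    using N_mono[of \<alpha> y \<theta>] N_mono[of y \<beta> \<theta>] cl_range[of y] lo[of \<theta>] hi[of \<theta>]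
      cl_id[of \<alpha>] cl_id[of \<beta>] \<open>\<alpha> \<le> \<beta>\<close>
    unfolding N_def by auto
  have N_cont: "continuous_on UNIV (\<lambda>\<theta>. N \<theta> (f \<theta>))" if "continuous_on UNIV f" for f
  proof -
    have "continuous_on UNIV (\<lambda>\<theta>. cl (f \<theta>))"
      unfolding cl_def using that by (intro continuous_intros)
    then have "continuous_on UNIV (\<lambda>\<theta>. F \<theta> (cl (f \<theta>)))"
      using cl_range by (intro continuous_on_compose_Pair[OF cont]) auto
    then show ?thesis
      unfolding N_def using \<open>continuous_on UNIV (\<lambda>\<theta>. cl (f \<theta>))\<close> by (intro continuous_intros)
  qed
  obtain q where q_range: "\<And>\<theta>. L * \<alpha> / L \<le> q \<theta> \<and> q \<theta> \<le> L * \<beta> / L"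
    and q': "\<And>\<theta>. (q has_real_derivative N \<theta> (q \<theta>) - L * q \<theta>) (at \<theta>)"
    using damped_equation_bounded_solution[OF n N_lip _ _ N_range N_cont] mu LM unfolding L_def by auto
  have q_in: "\<alpha> \<le> q \<theta> \<and> q \<theta> \<le> \<beta>" for \<theta>
    using q_range[of \<theta>] n unfolding L_def by simp
  moreover have "N \<theta> (q \<theta>) - L * q \<theta> = F \<theta> (q \<theta>)" for \<theta>
    using cl_id q_in unfolding N_def by simp
  ultimately show ?thesis
    using q' by metis
qed

lemma relaxation_rate_ge:
  fixes y \<rho> :: real
  assumes y: "0 < y" "y \<le> 1" and "A \<ge> 0" "\<rho> \<ge> 0" "\<rho> * (1 + K) \<le> A * e"
  shows "A * (1 - y - e) \<le> A * (1 / y - 1) - \<rho> * (y + K)"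
proof -
  have "(1 / y - 1) - (1 - y) = (1 - y)^2 / y"
    using y by (simp add: field_simps power2_eq_square)
  moreover have "(1 - y)^2 / y \<ge> 0"
    using y by simp
  ultimately have "A * (1 - y) \<le> A * (1 / y - 1)"
    using assms(3) by (intro mult_left_mono) auto
  moreover have "\<rho> * (y + K) \<le> \<rho> * (1 + K)"
    using assms by (intro mult_left_mono) auto
  ultimately show ?thesis
    using assms(5) by (simp add: algebra_simps)
qed

text \<open>Once \<open>\<rho> (1 + K) < A e\<close>, the function \<open>(1 - q - e) exp (A \<theta>)\<close> is nonincreasing.\<close>
lemma bounded_solution_tendsto_1:
  fixes q \<rho> :: "real \<Rightarrow> real"
  assumes A: "A > 0" and K: "K \<ge> 0" and q_range: "\<And>\<theta>. 0 < q \<theta> \<and> q \<theta> \<le> 1"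
    and q': "\<And>\<theta>. (q has_real_derivative A * (1 / q \<theta> - 1) - \<rho> \<theta> * (q \<theta> + K)) (at \<theta>)"
    and \<rho>: "(\<rho> \<longlongrightarrow> 0) at_top" "\<And>\<theta>. \<rho> \<theta> \<ge> 0"
  shows "(q \<longlongrightarrow> 1) at_top"
proof (rule tendstoI)
  fix \<epsilon> :: real
  assume "\<epsilon> > 0"
  define e where "e = \<epsilon> / 2"
  have e: "e > 0"
    using \<open>\<epsilon> > 0\<close> e_def by simp
  have "\<forall>\<^sub>F \<theta> in at_top. \<rho> \<theta> < A * e / (1 + K)"
    using \<rho>(1) A e K by (intro order_tendstoD) auto
  then obtain T where T: "\<And>\<theta>. \<theta> \<ge> T \<Longrightarrow> \<rho> \<theta> * (1 + K) < A * e"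
    using K unfolding eventually_at_top_linorder by (auto simp: field_simps)
  define z where "z \<theta> = (1 - q \<theta> - e) * exp (A * \<theta>)" for \<theta>
  have z_decr: "z \<theta> \<le> z T" if "T \<le> \<theta>" for \<theta>
  proof (rule DERIV_nonpos_imp_nonincreasing[OF that])
    fix x
    assume "T \<le> x"
    let ?q' = "A * (1 / q x - 1) - \<rho> x * (q x + K)"
    have "(z has_real_derivative (A * (1 - q x - e) - ?q') * exp (A * x)) (at x)"
      unfolding z_def by (rule derivative_eq_intros q' refl)+ (simp add: algebra_simps)
    moreover have "A * (1 - q x - e) - ?q' \<le> 0"
      using relaxation_rate_ge[of "q x" A "\<rho> x" K e] q_range[of x] A \<rho>(2)[of x] T[OF \<open>T \<le> x\<close>]
      by simp
    ultimately show "\<exists>y. (z has_real_derivative y) (at x) \<and> y \<le> 0"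
      by (meson exp_ge_zero mult_nonpos_nonneg)
  qed
  have "((\<lambda>\<theta>. exp (A * T) * exp (- (A * \<theta>))) \<longlongrightarrow> 0) at_top"
    using A by real_asymp
  then have "\<forall>\<^sub>F \<theta> in at_top. exp (A * T) * exp (- (A * \<theta>)) < e"
    using e by (intro order_tendstoD) auto
  then show "\<forall>\<^sub>F \<theta> in at_top. dist (q \<theta>) 1 < \<epsilon>"
    using eventually_ge_at_top[of T]
  proof eventually_elim
    case (elim \<theta>)
    have "z T \<le> exp (A * T)"
      unfolding z_def using q_range[of T] e by (simp add: mult_le_cancel_right1)
    then have "(1 - q \<theta> - e) * exp (A * \<theta>) \<le> exp (A * T)"
      using z_decr[OF elim(2)] unfolding z_def by linarith
    then have "1 - q \<theta> - e \<le> exp (A * T) * exp (- (A * \<theta>))"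
      by (simp add: exp_minus field_simps)
    then show ?case
      using elim(1) q_range[of \<theta>] e_def by (simp add: dist_real_def)
  qed
qed

section \<open>Scalar autonomous equations\<close>

lemma exists_antiderivative:
  fixes f :: "real \<Rightarrow> real"
  assumes f: "continuous_on UNIV f"
  shows "\<exists>Z. \<forall>x. (Z has_real_derivative f x) (at x)"
proof -
  define Z where "Z y = integral {0..y} f - integral {y..0} f" for y
  have fi: "f integrable_on {a..b}" for a b
    by (rule integrable_continuous_interval, rule continuous_on_subset[OF f]) auto
  have null: "integral {a..b} f = 0" if "b \<le> a" for a b
    by (metis has_integral_null_real content_real_eq_0 integral_unique that)
  have "(Z has_real_derivative f x) (at x)" for x
  proof -
    define c where "c = - \<bar>x\<bar> - 1"
    have eq: "integral {c..y} f - integral {c..0} f = Z y" if "y \<in> {c<..}" for y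
    proof (cases "y \<ge> 0")
      case True
      then have "integral {c..0} f + integral {0..y} f = integral {c..y} f"
        using c_def by (intro Henstock_Kurzweil_Integration.integral_combine fi) auto
      then show ?thesis
        using True null[of 0 y] by (simp add: Z_def)
    next
      case False
      then have "integral {c..y} f + integral {y..0} f = integral {c..0} f"
        using that by (intro Henstock_Kurzweil_Integration.integral_combine fi) auto
      then show ?thesis
        using False null[of y 0] by (simp add: Z_def)
    qed
    have "((\<lambda>y. integral {c..y} f) has_real_derivative f x) (at x within {c..x+1})"
      using c_def by (intro integral_has_real_derivative continuous_on_subset[OF f]) auto
    then have "((\<lambda>y. integral {c..y} f - integral {c..0} f) has_real_derivative f x) (at x)"
      using at_within_interior[of x "{c..x+1}"] c_def by (auto intro!: derivative_eq_intros)
    then show ?thesis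
      by (rule has_field_derivative_transform_within_open[where S="{c<..}"]) (use eq c_def in auto)
  qed
  then show ?thesis
    by blast
qed

lemma strict_mono_surj_if_derivative_ge:
  fixes Z d :: "real \<Rightarrow> real"
  assumes Zd: "\<And>x. (Z has_real_derivative d x) (at x)" and d: "\<And>x. lo \<le> d x" and lo: "0 < lo"
  shows "strict_mono Z" "surj Z"
proof -
  have Z_cont: "continuous_on S Z" for S
    using Zd by (meson DERIV_continuous continuous_at_imp_continuous_on)
  show "strict_mono Z"
  proof (rule strict_monoI)
    fix x y :: real
    assume "x < y"
    then show "Z x < Z y"
    proof (rule DERIV_pos_imp_increasing)
      show "\<exists>y. (Z has_real_derivative y) (at t) \<and> 0 < y" for t
        using Zd[of t] d[of t] lo by (intro exI[of _ "d t"]) auto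
    qed
  qed
  have shift_mono: "Z x - lo * x \<le> Z y - lo * y" if "x \<le> y" for x y
    using DERIV_nonneg_imp_nondecreasing[OF that, of "\<lambda>x. Z x - lo * x"] Zd d
    by (force intro!: derivative_eq_intros)
  have above: "Z 0 + lo * x \<le> Z x" if "0 \<le> x" for x
    using shift_mono[OF that] by simp
  have below: "Z x \<le> Z 0 + lo * x" if "x \<le> 0" for x
    using shift_mono[OF that] by simp
  have "\<exists>x. Z x = \<zeta>" for \<zeta>
  proof (cases "Z 0 \<le> \<zeta>")
    case True
    then have "\<exists>x. 0 \<le> x \<and> x \<le> (\<zeta> - Z 0) / lo \<and> Z x = \<zeta>"
      using lo above[of "(\<zeta> - Z 0) / lo"] by (intro IVT' Z_cont) auto
    then show ?thesis
      by blast
  next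
    case False
    then have "\<exists>x. (\<zeta> - Z 0) / lo \<le> x \<and> x \<le> 0 \<and> Z x = \<zeta>"
      using lo below[of "(\<zeta> - Z 0) / lo"] by (intro IVT' Z_cont) (auto simp: divide_nonpos_pos)
    then show ?thesis
      by blast
  qed
  then show "surj Z"
    by (metis surjI)
qed

lemma exists_solution_autonomous_positive:
  fixes f :: "real \<Rightarrow> real"
  assumes f: "continuous_on UNIV f" and pos: "\<And>x. 0 < f x" and bound: "\<And>x. f x \<le> C"
  shows "\<exists>\<Theta>. (\<forall>\<zeta>. (\<Theta> has_real_derivative f (\<Theta> \<zeta>)) (at \<zeta>)) \<and>
    filterlim \<Theta> at_top at_top \<and> filterlim \<Theta> at_bot at_bot"
proof -
  have "continuous_on UNIV (\<lambda>x. 1 / f x)"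
    using f pos by (intro continuous_intros) (auto simp: less_imp_neq[symmetric])
  then obtain Z where Zd: "\<And>x. (Z has_real_derivative 1 / f x) (at x)"
    using exists_antiderivative by blast
  have C: "0 < C"
    using pos[of 0] bound[of 0] by linarith
  have lo: "1 / C \<le> 1 / f x" for x
    using pos[of x] bound[of x] by (simp add: frac_le)
  have mono: "strict_mono Z" and "surj Z"
    using strict_mono_surj_if_derivative_ge[OF Zd lo] C by simp_all
  define \<Theta> where "\<Theta> = inv Z"
  have Z_\<Theta>: "Z (\<Theta> \<zeta>) = \<zeta>" and \<Theta>_Z: "\<Theta> (Z \<theta>) = \<theta>" for \<zeta> \<theta>
    unfolding \<Theta>_def using \<open>surj Z\<close> strict_mono_imp_inj_on[OF mono]
    by (simp_all add: surj_f_inv_f inv_f_f)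
  have Z_cont: "isCont Z x" for x
    using Zd by (rule DERIV_isCont)
  have "isCont \<Theta> (Z (\<Theta> \<zeta>))" for \<zeta>
    by (rule isCont_inverse_function2[of "\<Theta> \<zeta> - 1" _ "\<Theta> \<zeta> + 1"]) (auto simp: \<Theta>_Z Z_cont)
  then have "(\<Theta> has_real_derivative inverse (1 / f (\<Theta> \<zeta>))) (at \<zeta>)" for \<zeta>
    using Zd pos[of "\<Theta> \<zeta>"]
    by (intro DERIV_inverse_function[where f=Z and a="\<zeta> - 1" and b="\<zeta> + 1"]) (auto simp: Z_\<Theta>)
  moreover have "B \<le> \<Theta> \<zeta> \<longleftrightarrow> Z B \<le> \<zeta>" "\<Theta> \<zeta> \<le> B \<longleftrightarrow> \<zeta> \<le> Z B" for B \<zeta>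
    using strict_mono_less_eq[OF mono, of B "\<Theta> \<zeta>"] strict_mono_less_eq[OF mono, of "\<Theta> \<zeta>" B]
    by (simp_all add: Z_\<Theta>)
  then have "filterlim \<Theta> at_top at_top" "filterlim \<Theta> at_bot at_bot"
    unfolding filterlim_at_top filterlim_at_bot eventually_at_top_linorder eventually_at_bot_linorder
    by auto
  ultimately show ?thesis
    by auto
qed

section \<open>The reduced profile\<close>

definition falling_logistic :: "real \<Rightarrow> real" where
  "falling_logistic \<theta> = 1 / (1 + exp \<theta>)"

lemma falling_logistic_bounds: "0 < falling_logistic \<theta>" "falling_logistic \<theta> < 1"
proof -
  have "0 < 1 + exp \<theta>"
    by (simp add: add_pos_pos)
  then show "0 < falling_logistic \<theta>" "falling_logistic \<theta> < 1"
    by (simp_all add: falling_logistic_def field_simps)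
qed

lemma falling_logistic_has_derivative:
  "(falling_logistic has_real_derivative - (falling_logistic \<theta> * (1 - falling_logistic \<theta>))) (at \<theta>)"
proof -
  have p: "0 < 1 + exp \<theta>"
    by (simp add: add_pos_pos)
  then have "(falling_logistic has_real_derivative - exp \<theta> / (1 + exp \<theta>)^2) (at \<theta>)"
    unfolding falling_logistic_def fun_eq_iff
    by (auto intro!: derivative_eq_intros simp: power2_eq_square)
  moreover have "- exp \<theta> / (1 + exp \<theta>)^2 = - (falling_logistic \<theta> * (1 - falling_logistic \<theta>))"
    using p by (simp add: falling_logistic_def field_simps power2_eq_square)
  ultimately show ?thesis
    by simp
qed

lemma continuous_on_falling_logistic [continuous_intros]:
  "continuous_on S f \<Longrightarrow> continuous_on S (\<lambda>x. falling_logistic (f x))"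
  unfolding falling_logistic_def by (intro continuous_intros) (smt (verit) exp_gt_zero)+

lemma falling_logistic_tendsto:
  "(falling_logistic \<longlongrightarrow> 0) at_top" "(falling_logistic \<longlongrightarrow> 1) at_bot"
  unfolding falling_logistic_def by real_asymp+

definition reduced_field :: "real \<Rightarrow> real \<Rightarrow> real \<Rightarrow> real \<Rightarrow> real" where
  "reduced_field A K \<theta> y = A * (1 / y - 1) - falling_logistic \<theta> * (y + K)"

lemma reduced_field_slope:
  assumes A: "A > 0" and y: "0 < m" "m \<le> y2" "y2 \<le> y1" "y1 \<le> 1"
  shows "A * (y1 - y2) \<le> reduced_field A K \<theta> y2 - reduced_field A K \<theta> y1 \<and>
    reduced_field A K \<theta> y2 - reduced_field A K \<theta> y1 \<le> (A / m^2 + 1) * (y1 - y2)"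
proof -
  have pos: "0 < y2" "0 < y1" and "y1 * y2 \<le> 1" "m * m \<le> y1 * y2"
    using y by (auto intro: mult_le_one mult_mono)
  then have "A \<le> A / (y1 * y2)" "A / (y1 * y2) \<le> A / m^2"
    using A y by (simp add: le_divide_eq mult_left_le, simp add: power2_eq_square frac_le)
  then have lower: "A \<le> A / (y1 * y2) + falling_logistic \<theta>"
    and upper: "A / (y1 * y2) + falling_logistic \<theta> \<le> A / m^2 + 1"
    using falling_logistic_bounds[of \<theta>] by linarith+
  have "reduced_field A K \<theta> y2 - reduced_field A K \<theta> y1
      = (A / (y1 * y2) + falling_logistic \<theta>) * (y1 - y2)"
    unfolding reduced_field_def using pos by (simp add: field_simps)
  then show ?thesis
    using mult_right_mono[OF lower, of "y1 - y2"] mult_right_mono[OF upper, of "y1 - y2"] y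
    by simp
qed

lemma reduced_field_nonneg:
  assumes "A > 0" "K \<ge> 0" "0 < m" "m \<le> 1/2" "m * (1 + 2 * K) \<le> A"
  shows "0 \<le> reduced_field A K \<theta> m"
proof -
  have "falling_logistic \<theta> * (m + K) \<le> m + K"
    using falling_logistic_bounds[of \<theta>] assms by (intro mult_left_le_one_le) auto
  moreover have "A / m \<ge> 1 + 2 * K" "A \<le> A / (2 * m)"
    using assms by (simp_all add: field_simps)
  ultimately show ?thesis
    unfolding reduced_field_def using assms by (simp add: algebra_simps diff_divide_distrib)
qed

lemma exists_reduced_profile:
  fixes A K :: real
  assumes A: "A > 0" and K: "K \<ge> 0"
  shows "\<exists>q. (\<forall>\<theta>. 0 < q \<theta> \<and> q \<theta> \<le> 1) \<and>
    (\<forall>\<theta>. (q has_real_derivative reduced_field A K \<theta> (q \<theta>)) (at \<theta>)) \<and> (q \<longlongrightarrow> 1) at_top"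
proof -
  define m where "m = min (1/2) (A / (1 + 2 * K))"
  have m: "0 < m" "m \<le> 1/2" "m * (1 + 2 * K) \<le> A"
  proof -
    show "0 < m"
      unfolding m_def using A K by simp
    show "m \<le> 1/2"
      unfolding m_def by (rule min.cobounded1)
    have "m \<le> A / (1 + 2 * K)"
      unfolding m_def by (rule min.cobounded2)
    then show "m * (1 + 2 * K) \<le> A"
      using K by (simp add: field_simps)
  qed
  have "A * m^2 \<le> A"
    using m A by (simp add: power_le_one mult_left_le)
  then have "A \<le> A / m^2 + 1"
    using m by (simp add: field_simps add_increasing2)
  moreover have "continuous_on (UNIV \<times> {m..1}) (\<lambda>(\<theta>, y). reduced_field A K \<theta> y)"
    unfolding reduced_field_def case_prod_beta' using m by (intro continuous_intros) auto
  moreover have "reduced_field A K \<theta> 1 \<le> 0" for \<theta>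
    unfolding reduced_field_def using falling_logistic_bounds[of \<theta>] K by simp
  ultimately have "\<exists>q. (\<forall>\<theta>. m \<le> q \<theta> \<and> q \<theta> \<le> 1) \<and>
      (\<forall>\<theta>. (q has_real_derivative reduced_field A K \<theta> (q \<theta>)) (at \<theta>))"
    using A m reduced_field_nonneg[OF A K m] reduced_field_slope[OF A m(1)]
    by (intro bounded_entire_solution[where mu = A and M = "A / m^2 + 1"]) auto
  then obtain q where q_range: "\<And>\<theta>. m \<le> q \<theta> \<and> q \<theta> \<le> 1"
    and q': "\<And>\<theta>. (q has_real_derivative reduced_field A K \<theta> (q \<theta>)) (at \<theta>)"
    by blast
  have q_in: "0 < q \<theta> \<and> q \<theta> \<le> 1" for \<theta>
    using q_range[of \<theta>] m(1) by linarith
  have "(q \<longlongrightarrow> 1) at_top"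
    using A K q_in q'[unfolded reduced_field_def] falling_logistic_tendsto(1)
      less_imp_le[OF falling_logistic_bounds(1)]
    by (rule bounded_solution_tendsto_1)
  then show ?thesis
    using q_in q' by blast
qed

section \<open>The layer problem\<close>

lemma has_vector_derivative_fst:
  "(f has_vector_derivative f') F \<Longrightarrow> ((\<lambda>x. fst (f x)) has_vector_derivative fst f') F"
  unfolding has_vector_derivative_def by (drule has_derivative_fst) simp

lemma has_vector_derivative_snd:
  "(f has_vector_derivative f') F \<Longrightarrow> ((\<lambda>x. snd (f x)) has_vector_derivative snd f') F"
  unfolding has_vector_derivative_def by (drule has_derivative_snd) simp

lemma zero_if_derivative_mult_nonneg_tendsto_0:
  fixes u g :: "real \<Rightarrow> real"
  assumes u': "\<And>x. (u has_real_derivative u x * g x) (at x)" and g: "\<And>x. 0 \<le> g x"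
    and lim: "(u \<longlongrightarrow> 0) at_top"
  shows "u x = 0"
proof -
  have "u x ^ 2 \<le> u t ^ 2" if "x \<le> t" for t
  proof (rule DERIV_nonneg_imp_nondecreasing[OF that])
    fix y
    have "((\<lambda>x. u x ^ 2) has_real_derivative 2 * u y ^ 2 * g y) (at y)"
      by (rule derivative_eq_intros u' refl)+ (simp add: power2_eq_square)
    then show "\<exists>d. ((\<lambda>x. u x ^ 2) has_real_derivative d) (at y) \<and> 0 \<le> d"
      using g[of y] by auto
  qed
  then have "\<forall>\<^sub>F t in at_top. u x ^ 2 \<le> u t ^ 2"
    by (rule eventually_at_top_linorderI)
  moreover have "((\<lambda>t. u t ^ 2) \<longlongrightarrow> 0) at_top"
    using tendsto_power[OF lim, of 2] by simp
  ultimately have "u x ^ 2 \<le> 0"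
    by (intro tendsto_lowerbound[OF _ _ trivial_limit_at_top_linorder]) simp_all
  then show ?thesis
    by simp
qed

definition plane_defect :: "real \<Rightarrow> state \<Rightarrow> real" where
  "plane_defect D = (\<lambda>(w, v, s, j). w + j - v - D * s)"

lemma plane_defect_simp [simp]: "plane_defect D (w, v, s, j) = w + j - v - D * s"
  by (simp add: plane_defect_def)

lemma isCont_plane_defect: "isCont (plane_defect D) x"
  unfolding plane_defect_def case_prod_beta' by (intro continuous_intros)

lemma layer_solution_component_derivatives:
  assumes "(phi has_vector_derivative layer_rhs c tau D H (phi \<zeta>)) (at \<zeta>)"
    and "phi \<zeta> = (w, v, s, j)"
  shows "((\<lambda>\<zeta>. fst (phi \<zeta>)) has_real_derivative 0) (at \<zeta>)"
    and "((\<lambda>\<zeta>. fst (snd (phi \<zeta>))) has_real_derivative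
      c^3 / (1 - c^3 * tau) * (tau * (w + j - v - D * s) * v^2 - tau * H * s * v - j)) (at \<zeta>)"
    and "((\<lambda>\<zeta>. fst (snd (snd (phi \<zeta>)))) has_real_derivative - (H / D) * s * v) (at \<zeta>)"
    and "((\<lambda>\<zeta>. snd (snd (snd (phi \<zeta>)))) has_real_derivative
      1 / (1 - c^3 * tau) * ((w + j - v - D * s) * v^2 - H * s * v - c^3 * j)) (at \<zeta>)"
  using has_vector_derivative_fst[OF assms(1)]
    has_vector_derivative_fst[OF has_vector_derivative_snd[OF assms(1)]]
    has_vector_derivative_fst[OF has_vector_derivative_snd[OF has_vector_derivative_snd[OF assms(1)]]]
    has_vector_derivative_snd[OF has_vector_derivative_snd[OF has_vector_derivative_snd[OF assms(1)]]]
  by (simp_all add: assms(2) layer_rhs_def has_real_derivative_iff_has_vector_derivative)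

lemma plane_defect_has_derivative:
  assumes phi': "(phi has_vector_derivative layer_rhs c tau D H (phi \<zeta>)) (at \<zeta>)"
    and "1 - c^3 * tau \<noteq> 0" "D \<noteq> 0"
  shows "((\<lambda>\<zeta>. plane_defect D (phi \<zeta>)) has_real_derivative
    plane_defect D (phi \<zeta>) * fst (snd (phi \<zeta>))^2) (at \<zeta>)"
proof -
  obtain w v s j where x: "phi \<zeta> = (w, v, s, j)"
    by (cases "phi \<zeta>") auto
  have defect_eq: "(\<lambda>\<zeta>. plane_defect D (phi \<zeta>)) = (\<lambda>\<zeta>. fst (phi \<zeta>) + snd (snd (snd (phi \<zeta>)))
      - fst (snd (phi \<zeta>)) - D * fst (snd (snd (phi \<zeta>))))"
    by (simp add: fun_eq_iff plane_defect_def case_prod_beta')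
  have "((\<lambda>\<zeta>. plane_defect D (phi \<zeta>)) has_real_derivative
      0 + 1 / (1 - c^3 * tau) * ((w + j - v - D * s) * v^2 - H * s * v - c^3 * j)
      - c^3 / (1 - c^3 * tau) * (tau * (w + j - v - D * s) * v^2 - tau * H * s * v - j)
      - D * (- (H / D) * s * v)) (at \<zeta>)" (is "(_ has_real_derivative ?d) _")
    unfolding defect_eq using layer_solution_component_derivatives[OF phi' x]
    by (intro DERIV_diff DERIV_add DERIV_cmult)
  moreover have "?d = (w + j - v - D * s) * v^2"
  proof -
    define E where "E = 1 - c^3 * tau"
    define X where "X = (w + j - v - D * s) * v^2 - H * s * v"
    have "E \<noteq> 0"
      using assms(2) unfolding E_def .
    then have "1 / E * (X - c^3 * j) - c^3 / E * (tau * X - j) = X"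
      by (simp add: field_simps) (simp add: E_def algebra_simps)
    then show ?thesis
      using assms(3) unfolding E_def[symmetric] X_def by (simp add: algebra_simps)
  qed
  ultimately show ?thesis
    by (simp add: x)
qed

lemma heteroclinic_imp_in_plane:
  fixes phi :: "real \<Rightarrow> state"
  assumes "1 - c^3 * tau \<noteq> 0" "D \<noteq> 0"
    and "heteroclinic c tau D H phi (p3 a s) (p2 a)"
  shows "s = a / D" and "fst (phi \<zeta>) = a" and "plane_defect D (phi \<zeta>) = 0"
proof -
  have phi': "\<And>\<zeta>. (phi has_vector_derivative layer_rhs c tau D H (phi \<zeta>)) (at \<zeta>)"
    and top: "(phi \<longlongrightarrow> p2 a) at_top" and bot: "(phi \<longlongrightarrow> p3 a s) at_bot"
    using assms(3) unfolding heteroclinic_def by auto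
  have "((\<lambda>\<zeta>. plane_defect D (phi \<zeta>)) \<longlongrightarrow> plane_defect D (p2 a)) at_top"
    by (rule isCont_tendsto_compose[OF isCont_plane_defect top])
  then have defect_0: "plane_defect D (phi \<zeta>) = 0" for \<zeta>
    using plane_defect_has_derivative[OF phi' assms(1,2)]
    by (intro zero_if_derivative_mult_nonneg_tendsto_0[where g = "\<lambda>\<zeta>. fst (snd (phi \<zeta>))^2"])
      (simp_all add: p2_def)
  then show "plane_defect D (phi \<zeta>) = 0" .
  have "((\<lambda>\<zeta>. plane_defect D (phi \<zeta>)) \<longlongrightarrow> plane_defect D (p3 a s)) at_bot"
    by (rule isCont_tendsto_compose[OF isCont_plane_defect bot])
  then have "a - D * s = 0"
    using defect_0 by (simp add: p3_def tendsto_const_iff)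
  then show "s = a / D"
    using assms(2) by (simp add: field_simps)
  have "((\<lambda>\<zeta>. fst (phi \<zeta>)) has_real_derivative 0) (at \<zeta>)" for \<zeta>
    by (rule layer_solution_component_derivatives(1)[OF phi', where w = "fst (phi \<zeta>)"
          and v = "fst (snd (phi \<zeta>))" and s = "fst (snd (snd (phi \<zeta>)))" and j = "snd (snd (snd (phi \<zeta>)))"])
      simp
  then have "(\<lambda>\<zeta>. fst (phi \<zeta>)) = (\<lambda>_. fst (phi 0))"
    using DERIV_isconst_all[of "\<lambda>\<zeta>. fst (phi \<zeta>)"] by blast
  moreover have "((\<lambda>\<zeta>. fst (phi \<zeta>)) \<longlongrightarrow> a) at_top"
    using tendsto_fst[OF top] by (simp add: p2_def)
  ultimately show "fst (phi \<zeta>) = a"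
    by (metis tendsto_const_iff trivial_limit_at_top_linorder)
qed

definition plane_point :: "real \<Rightarrow> real \<Rightarrow> real \<Rightarrow> real \<Rightarrow> state" where
  "plane_point a D v s = (a, v, s, v + D * s - a)"

lemma layer_solution_of_plane_solution:
  assumes "1 - c^3 * tau \<noteq> 0" "D \<noteq> 0"
    and v': "(v has_real_derivative
      - (c^3 / (1 - c^3 * tau)) * (tau * H * s \<zeta> * v \<zeta> + v \<zeta> + D * s \<zeta> - a)) (at \<zeta>)"
    and s': "(s has_real_derivative - (H / D) * s \<zeta> * v \<zeta>) (at \<zeta>)"
  shows "((\<lambda>\<zeta>. plane_point a D (v \<zeta>) (s \<zeta>)) has_vector_derivative
    layer_rhs c tau D H (plane_point a D (v \<zeta>) (s \<zeta>))) (at \<zeta>)"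
proof -
  define E where "E = 1 - c^3 * tau"
  define v'' where "v'' = - (c^3 / E) * (tau * H * s \<zeta> * v \<zeta> + v \<zeta> + D * s \<zeta> - a)"
  have "((\<lambda>\<zeta>. plane_point a D (v \<zeta>) (s \<zeta>)) has_vector_derivative
      (0, v'', - (H / D) * s \<zeta> * v \<zeta>, v'' + D * (- (H / D) * s \<zeta> * v \<zeta>))) (at \<zeta>)"
    using v' s' unfolding plane_point_def v''_def E_def
    by (intro has_vector_derivative_Pair)
      (auto intro!: derivative_eq_intros simp flip: has_real_derivative_iff_has_vector_derivative)
  moreover have "layer_rhs c tau D H (plane_point a D (v \<zeta>) (s \<zeta>)) =
      (0, v'', - (H / D) * s \<zeta> * v \<zeta>, v'' + D * (- (H / D) * s \<zeta> * v \<zeta>))"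
  proof -
    define J where "J = v \<zeta> + D * s \<zeta> - a"
    have "E \<noteq> 0"
      using assms(1) unfolding E_def .
    then have "1 / E * (- (H * s \<zeta> * v \<zeta>) - c^3 * J) = v'' + D * (- (H / D) * s \<zeta> * v \<zeta>)"
      using assms(2) unfolding v''_def J_def by (simp add: field_simps) (simp add: E_def algebra_simps)
    moreover have "c^3 / E * (- (tau * H * s \<zeta> * v \<zeta>) - J) = v''"
      unfolding v''_def J_def by (simp add: algebra_simps)
    moreover have "layer_rhs c tau D H (plane_point a D (v \<zeta>) (s \<zeta>)) =
        (0, c^3 / E * (- (tau * H * s \<zeta> * v \<zeta>) - J), - (H / D) * s \<zeta> * v \<zeta>,
          1 / E * (- (H * s \<zeta> * v \<zeta>) - c^3 * J))"
      by (simp add: layer_rhs_def plane_point_def E_def J_def)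
    ultimately show ?thesis
      by simp
  qed
  ultimately show ?thesis
    by simp
qed

lemma tendsto_plane_point:
  assumes "(v \<longlongrightarrow> v0) F" "(s \<longlongrightarrow> s0) F"
  shows "((\<lambda>\<zeta>. plane_point a D (v \<zeta>) (s \<zeta>)) \<longlongrightarrow> plane_point a D v0 s0) F"
  unfolding plane_point_def by (intro tendsto_intros assms)

definition plane_profile :: "real \<Rightarrow> real \<Rightarrow> (real \<Rightarrow> real) \<Rightarrow> (real \<Rightarrow> real) \<Rightarrow> real \<Rightarrow> state" where
  "plane_profile a D r q \<zeta> = plane_point a D (a * (1 - r \<zeta>) * q \<zeta>) (a / D * r \<zeta>)"

lemma plane_profile_has_derivative:
  fixes a c tau D H :: real and r q :: "real \<Rightarrow> real"
  defines "\<kappa> \<equiv> c^3 / (1 - c^3 * tau)" and "h \<equiv> a * H / D"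
  assumes nondeg: "1 - c^3 * tau \<noteq> 0" "a \<noteq> 0" "D \<noteq> 0" "H \<noteq> 0" "q \<zeta> \<noteq> 0"
    and r': "(r has_real_derivative - (r \<zeta> * (1 - r \<zeta>)) * (h * q \<zeta>)) (at \<zeta>)"
    and q': "(q has_real_derivative (\<kappa> / h * (1 / q \<zeta> - 1) - r \<zeta> * (q \<zeta> + \<kappa> * tau)) * (h * q \<zeta>)) (at \<zeta>)"
  shows "(plane_profile a D r q has_vector_derivative
    layer_rhs c tau D H (plane_profile a D r q \<zeta>)) (at \<zeta>)"
proof -
  define v where "v \<zeta> = a * (1 - r \<zeta>) * q \<zeta>" for \<zeta>
  define s where "s \<zeta> = a / D * r \<zeta>" for \<zeta>
  have "(v has_real_derivative a * (r \<zeta> * (1 - r \<zeta>) * (h * q \<zeta>)) * q \<zeta>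
      + a * (1 - r \<zeta>) * ((\<kappa> / h * (1 / q \<zeta> - 1) - r \<zeta> * (q \<zeta> + \<kappa> * tau)) * (h * q \<zeta>))) (at \<zeta>)"
    unfolding v_def by (rule derivative_eq_intros r' q' refl)+ (simp add: algebra_simps)
  moreover have "a * (r \<zeta> * (1 - r \<zeta>) * (h * q \<zeta>)) * q \<zeta>
      + a * (1 - r \<zeta>) * ((\<kappa> / h * (1 / q \<zeta> - 1) - r \<zeta> * (q \<zeta> + \<kappa> * tau)) * (h * q \<zeta>))
      = - \<kappa> * (tau * H * s \<zeta> * v \<zeta> + v \<zeta> + D * s \<zeta> - a)"
  proof -
    have "h \<noteq> 0" and H_eq: "H = h * D / a"
      unfolding h_def using nondeg by simp_all
    then show ?thesis
      using nondeg unfolding s_def v_def H_eq by (simp add: field_simps)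
  qed
  ultimately have v': "(v has_real_derivative - \<kappa> * (tau * H * s \<zeta> * v \<zeta> + v \<zeta> + D * s \<zeta> - a)) (at \<zeta>)"
    by simp
  have "(s has_real_derivative a / D * (- (r \<zeta> * (1 - r \<zeta>)) * (h * q \<zeta>))) (at \<zeta>)"
    unfolding s_def by (rule DERIV_cmult[OF r'])
  moreover have "a / D * (- (r \<zeta> * (1 - r \<zeta>)) * (h * q \<zeta>)) = - (H / D) * s \<zeta> * v \<zeta>"
    unfolding s_def v_def h_def using nondeg by (simp add: divide_simps)
  ultimately have s': "(s has_real_derivative - (H / D) * s \<zeta> * v \<zeta>) (at \<zeta>)"
    by (simp only:)
  have "plane_profile a D r q = (\<lambda>\<zeta>. plane_point a D (v \<zeta>) (s \<zeta>))"
    by (simp add: fun_eq_iff plane_profile_def v_def s_def)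
  then show ?thesis
    using layer_solution_of_plane_solution[OF nondeg(1,3) v'[unfolded \<kappa>_def] s'] by simp
qed

lemma plane_profile_tendsto:
  assumes "D \<noteq> 0" and q_bound: "\<And>\<zeta>. \<bar>q \<zeta>\<bar> \<le> 1"
    and r_top: "(r \<longlongrightarrow> 0) at_top" and q_top: "(q \<longlongrightarrow> 1) at_top" and r_bot: "(r \<longlongrightarrow> 1) at_bot"
  shows "(plane_profile a D r q \<longlongrightarrow> p2 a) at_top" and "(plane_profile a D r q \<longlongrightarrow> p3 a (a / D)) at_bot"
proof -
  have "((\<lambda>\<zeta>. plane_point a D (a * (1 - r \<zeta>) * q \<zeta>) (a / D * r \<zeta>))
      \<longlongrightarrow> plane_point a D (a * (1 - 0) * 1) (a / D * 0)) at_top"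
    by (intro tendsto_plane_point tendsto_intros r_top q_top)
  then show "(plane_profile a D r q \<longlongrightarrow> p2 a) at_top"
    by (simp add: plane_profile_def[abs_def] plane_point_def p2_def)
  have "((\<lambda>\<zeta>. a * (1 - r \<zeta>) * q \<zeta>) \<longlongrightarrow> 0) at_bot"
  proof (rule Lim_null_comparison)
    show "\<forall>\<^sub>F \<zeta> in at_bot. norm (a * (1 - r \<zeta>) * q \<zeta>) \<le> \<bar>a * (1 - r \<zeta>)\<bar>"
      using q_bound by (intro always_eventually allI) (simp add: abs_mult mult_left_le)
    have "((\<lambda>\<zeta>. \<bar>a * (1 - r \<zeta>)\<bar>) \<longlongrightarrow> \<bar>a * (1 - 1)\<bar>) at_bot"
      by (intro tendsto_intros r_bot)
    then show "((\<lambda>\<zeta>. \<bar>a * (1 - r \<zeta>)\<bar>) \<longlongrightarrow> 0) at_bot"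
      by simp
  qed
  then have "((\<lambda>\<zeta>. plane_point a D (a * (1 - r \<zeta>) * q \<zeta>) (a / D * r \<zeta>))
      \<longlongrightarrow> plane_point a D 0 (a / D * 1)) at_bot"
    by (intro tendsto_plane_point tendsto_intros r_bot)
  then show "(plane_profile a D r q \<longlongrightarrow> p3 a (a / D)) at_bot"
    using \<open>D \<noteq> 0\<close> by (simp add: plane_profile_def[abs_def] plane_point_def p3_def)
qed

text \<open>On the invariant plane put \<open>s = (a/D) r\<close> and \<open>v = a (1 - r) q\<close>, and change time by
  \<open>d\<theta>/d\<zeta> = (a H/D) q\<close>. Then \<open>r' = - r (1 - r)\<close>, so \<open>r = falling_logistic \<theta>\<close>, and \<open>q\<close> solves
  \<open>q' = reduced_field (\<kappa> / (a H/D)) (\<kappa> \<tau>) \<theta> q\<close> with \<open>\<kappa> = c\<^sup>3 / (1 - c\<^sup>3 \<tau>)\<close>.\<close>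
lemma heteroclinic_exists:
  fixes a c D H tau :: real
  assumes a: "a > 0" and c: "c > 0" and D: "D > 0" and H: "H > 0" and tau: "tau \<ge> 0"
    and E: "1 - c^3 * tau > 0"
  shows "\<exists>phi. heteroclinic c tau D H phi (p3 a (a / D)) (p2 a)"
proof -
  define \<kappa> where "\<kappa> = c^3 / (1 - c^3 * tau)"
  define h where "h = a * H / D"
  have "\<kappa> > 0" and h: "h > 0"
    unfolding \<kappa>_def h_def using a c D H E by simp_all
  then obtain q where q_range: "\<And>\<theta>. 0 < q \<theta> \<and> q \<theta> \<le> 1"
    and q': "\<And>\<theta>. (q has_real_derivative reduced_field (\<kappa> / h) (\<kappa> * tau) \<theta> (q \<theta>)) (at \<theta>)"
    and q_top: "(q \<longlongrightarrow> 1) at_top"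
    using exists_reduced_profile[of "\<kappa> / h" "\<kappa> * tau"] tau by auto
  have "continuous_on UNIV (\<lambda>\<theta>. h * q \<theta>)"
    using q' by (intro continuous_intros) (meson DERIV_continuous continuous_at_imp_continuous_on)
  then obtain \<Theta> where \<Theta>': "\<And>\<zeta>. (\<Theta> has_real_derivative h * q (\<Theta> \<zeta>)) (at \<zeta>)"
    and \<Theta>_top: "filterlim \<Theta> at_top at_top" and \<Theta>_bot: "filterlim \<Theta> at_bot at_bot"
    using exists_solution_autonomous_positive[of "\<lambda>\<theta>. h * q \<theta>" h] q_range h by auto
  define r where "r \<zeta> = falling_logistic (\<Theta> \<zeta>)" for \<zeta>
  define Q where "Q \<zeta> = q (\<Theta> \<zeta>)" for \<zeta>
  have "(plane_profile a D r Q has_vector_derivative layer_rhs c tau D H (plane_profile a D r Q \<zeta>)) (at \<zeta>)"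
    for \<zeta>
    unfolding r_def Q_def using a D H E q_range[of "\<Theta> \<zeta>"]
      DERIV_chain2[OF falling_logistic_has_derivative \<Theta>'] DERIV_chain2[OF q'[unfolded reduced_field_def] \<Theta>']
    by (intro plane_profile_has_derivative) (auto simp: \<kappa>_def h_def)
  moreover have "(r \<longlongrightarrow> 0) at_top" "(r \<longlongrightarrow> 1) at_bot" "(Q \<longlongrightarrow> 1) at_top"
    unfolding r_def Q_def using falling_logistic_tendsto q_top \<Theta>_top \<Theta>_bot
    by (auto intro: filterlim_compose)
  moreover have "\<bar>Q \<zeta>\<bar> \<le> 1" for \<zeta>
    unfolding Q_def using q_range[of "\<Theta> \<zeta>"] by simp
  moreover have "p3 a (a / D) \<noteq> p2 a"
    using a by (simp add: p2_def p3_def)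
  ultimately show ?thesis
    unfolding heteroclinic_def using D plane_profile_tendsto[of D Q r a] by auto
qed

theorem lemma2:
  fixes a c D H tau :: real
  assumes "a > 0" "c > 0" "D > 0" "H > 0" "tau \<ge> 0" "1 - c^3 * tau > 0"
  shows "(\<forall>s. (\<exists>phi. heteroclinic c tau D H phi (p3 a s) (p2 a)) \<longleftrightarrow> s = a / D)
       \<and> (\<forall>phi. heteroclinic c tau D H phi (p3 a (a / D)) (p2 a) \<longrightarrow>
            (\<forall>\<zeta>. phi \<zeta> \<in> {(w, v, s, j). w = a \<and> a + j - v - D * s = 0}))"
proof -
  have nondeg: "1 - c^3 * tau \<noteq> 0" "D \<noteq> 0"
    using assms by auto
  show ?thesis
  proof (intro conjI allI impI iffI)
    fix s
    show "s = a / D" if "\<exists>phi. heteroclinic c tau D H phi (p3 a s) (p2 a)"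
      using that heteroclinic_imp_in_plane(1)[OF nondeg] by blast
    show "\<exists>phi. heteroclinic c tau D H phi (p3 a s) (p2 a)" if "s = a / D"
      using that heteroclinic_exists[OF assms] by simp
  next
    fix phi \<zeta>
    assume "heteroclinic c tau D H phi (p3 a (a / D)) (p2 a)"
    then have "fst (phi \<zeta>) = a" "plane_defect D (phi \<zeta>) = 0"
      by (simp_all add: heteroclinic_imp_in_plane(2,3)[OF nondeg])
    then show "phi \<zeta> \<in> {(w, v, s, j). w = a \<and> a + j - v - D * s = 0}"
      by (cases "phi \<zeta>") auto
  qed
qed

end
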